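(* Let $Y\subseteq R^n$ be a definable set and $\mathcal C$ a special linear decomposition of $Y$. Then for every box $B_1\subseteq R^n$ there is a box $B\supseteq B_1$ such that the collection $\mathcal D=\{B\cap D: D\in\mathcal C\}\setminus\{\emptyset\}$ is a special linear decomposition of $B\cap Y$.
   Context: Throughout, $\mathcal R=\langle R,<,+,0,\{x\mapsto\lambda x\}_{\lambda\in\Lambda}\rangle$ is an ordered vector space over an ordered division ring $\Lambda$; "definable" means definable in $\mathcal R$ with parameters. $R^n$ carries the product of the order topology, $cl$ denotes closure, $\pi:R^n\to R^{n-1}$ is the projection onto the first $n-1$ coordinates, $R^0=\{0\}$. A box is a set $(a_1,b_1)\times\dots\times(a_n,b_n)$ with $a_i<b_i$ in $R$. Linear maps: a linear (affine) map $R^m\to R$ is $x\mapsto\lambda_1x_1+\dots+\lambda_mx_m+a$ with $\lambda_i\in\Lambda$, $a\in R$. For $X\subseteq R^{m}$ and $f,g$ each either a linear map or one of the constant functions $\pm\infty$, with $f<g$ on $X$, put $(f,g)_X=\{(x,y)\in X\times R: f(x)<y<g(x)\}$ and let $\Gamma(f)_X$ be the graph of $f$ restricted to $X$; values at points outside $X$ are those of the linear map. Linear cells: $C\subseteq R$ is a linear cell if it is a singleton or an open interval with endpoints in $R\cup\{\pm\infty\}$; for $n>1$, $C\subseteq R^n$ is a linear cell if $C=\Gamma(f)_X$ with $f$ linear, or $C=(f,g)_X$ with $f,g$ linear or $\pm\infty$, $f<g$ on $X$, where $X\subseteq R^{n-1}$ is a linear cell. Linear decompositions: a linear decomposition of $R$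 is a finite partition of $R$ into linear cells; for $n>1$ a linear decomposition of $R^n$ is a finite partition $\mathcal C$ of $R^n$ into linear cells such that $\pi(\mathcal C)=\{\pi(D):D\in\mathcal C\}$ is a linear decomposition of $R^{n-1}$. For definable $Y\subseteq R^n$, a linear decomposition of $Y$ is $\{D\cap Y: D\in\mathcal C\}\setminus\{\emptyset\}$ for a linear decomposition $\mathcal C$ of $R^n$ each of whose members is contained in or disjoint from $Y$. Special linear decompositions are defined recursively: every linear decomposition of a subset of $R$ is special; for $n>1$ a linear decomposition $\mathcal C$ of $Y\subseteq R^n$ is special if (1) $\pi(\mathcal C)$ is a special linear decomposition of $\pi(Y)$; (2) for every two cells $\Gamma(f)_S,\Gamma(g)_T\in\mathcal C$ and every $V\in\pi(\mathcal C)$, one has $f<g$ on $V$, or $f=g$ on $V$, or $f>g$ on $V$; (3) for every two cells $\Gamma(h)_S,(f,g)_T\in\mathcal C$ there is no $c\in cl(S)\cap cl(T)$ with $f(c)<h(c)<g(c)$. *)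

theory Defs
  imports "HOL-Analysis.Analysis"
begin

text \<open>R is the carrier type 'r (a linearly ordered abelian group whose topology is the
order topology); Lambda is the type 'l (an ordered division ring); scal l x is the scalar
map x |-> l x.\<close>

definition ordered_vs :: "('l::{division_ring,linordered_ring_strict} \<Rightarrow> 'r::linordered_ab_group_add \<Rightarrow> 'r) \<Rightarrow> bool" where
  "ordered_vs scal \<longleftrightarrow>
     (\<forall>a b x. scal (a + b) x = scal a x + scal b x) \<and>
     (\<forall>a x y. scal a (x + y) = scal a x + scal a y) \<and>
     (\<forall>a b x. scal (a * b) x = scal a (scal b x)) \<and>
     (\<forall>x. scal 1 x = x) \<and>
     (\<forall>a x. 0 < a \<longrightarrow> 0 < x \<longrightarrow> 0 < scal a x)"

datatype ('l,'r) tm = Var nat | Par 'r | Zero | Plus "('l,'r) tm" "('l,'r) tm" | Scal 'l "('l,'r) tm"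

datatype ('l,'r) fm = Less "('l,'r) tm" "('l,'r) tm" | Equal "('l,'r) tm" "('l,'r) tm"
  | Neg "('l,'r) fm" | Conj "('l,'r) fm" "('l,'r) fm" | Exi nat "('l,'r) fm"

primrec tval :: "('l \<Rightarrow> 'r::linordered_ab_group_add \<Rightarrow> 'r) \<Rightarrow> (nat \<Rightarrow> 'r) \<Rightarrow> ('l,'r) tm \<Rightarrow> 'r" where
  "tval scal e (Var i) = e i"
| "tval scal e (Par a) = a"
| "tval scal e Zero = 0"
| "tval scal e (Plus s t) = tval scal e s + tval scal e t"
| "tval scal e (Scal l t) = scal l (tval scal e t)"

primrec sat :: "('l \<Rightarrow> 'r::linordered_ab_group_add \<Rightarrow> 'r) \<Rightarrow> (nat \<Rightarrow> 'r) \<Rightarrow> ('l,'r) fm \<Rightarrow> bool" where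
  "sat scal e (Less s t) = (tval scal e s < tval scal e t)"
| "sat scal e (Equal s t) = (tval scal e s = tval scal e t)"
| "sat scal e (Neg p) = (\<not> sat scal e p)"
| "sat scal e (Conj p q) = (sat scal e p \<and> sat scal e q)"
| "sat scal e (Exi i p) = (\<exists>v. sat scal (e(i := v)) p)"

definition Rn :: "nat \<Rightarrow> 'r list set" where
  "Rn n = {x. length x = n}"

definition definable :: "('l \<Rightarrow> 'r::linordered_ab_group_add \<Rightarrow> 'r) \<Rightarrow> nat \<Rightarrow> 'r list set \<Rightarrow> bool" where
  "definable scal n Y \<longleftrightarrow>
     (\<exists>\<phi>. Y = {x. length x = n \<and> sat scal (\<lambda>i. if i < n then x ! i else 0) \<phi>})"

text \<open>Closure in R^m with the product of the order topology.\<close>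
definition cl :: "nat \<Rightarrow> 'r::linorder_topology list set \<Rightarrow> 'r list set" where
  "cl m S = {c. length c = m \<and>
     (\<forall>U. (\<forall>i<m. open (U i) \<and> c ! i \<in> U i) \<longrightarrow>
          (\<exists>s\<in>S. length s = m \<and> (\<forall>i<m. s ! i \<in> U i)))}"

definition proj :: "'r list set \<Rightarrow> 'r list set" where
  "proj X = butlast ` X"

definition is_box :: "nat \<Rightarrow> 'r::linorder list set \<Rightarrow> bool" where
  "is_box n B \<longleftrightarrow> (\<exists>a b. length a = n \<and> length b = n \<and> (\<forall>i<n. a ! i < b ! i) \<and>
       B = {x. length x = n \<and> (\<forall>i<n. a ! i < x ! i \<and> x ! i < b ! i)})"

definition lval :: "('l \<Rightarrow> 'r::linordered_ab_group_add \<Rightarrow> 'r) \<Rightarrow> 'l list \<Rightarrow> 'r \<Rightarrow> 'r list \<Rightarrow> 'r" where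
  "lval scal cs a x = sum_list (map2 scal cs x) + a"

datatype ('l,'r) bnd = NInf | PInf | Lin "'l list" 'r

fun lo_lt :: "('l \<Rightarrow> 'r::linordered_ab_group_add \<Rightarrow> 'r) \<Rightarrow> ('l,'r) bnd \<Rightarrow> 'r list \<Rightarrow> 'r \<Rightarrow> bool" where
  "lo_lt scal NInf x y = True"
| "lo_lt scal PInf x y = False"
| "lo_lt scal (Lin cs a) x y = (lval scal cs a x < y)"

fun hi_gt :: "('l \<Rightarrow> 'r::linordered_ab_group_add \<Rightarrow> 'r) \<Rightarrow> ('l,'r) bnd \<Rightarrow> 'r list \<Rightarrow> 'r \<Rightarrow> bool" where
  "hi_gt scal NInf x y = False"
| "hi_gt scal PInf x y = True"
| "hi_gt scal (Lin cs a) x y = (y < lval scal cs a x)"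

fun bnd_lt :: "('l \<Rightarrow> 'r::linordered_ab_group_add \<Rightarrow> 'r) \<Rightarrow> ('l,'r) bnd \<Rightarrow> ('l,'r) bnd \<Rightarrow> 'r list \<Rightarrow> bool" where
  "bnd_lt scal NInf NInf x = False"
| "bnd_lt scal NInf _ x = True"
| "bnd_lt scal PInf _ x = False"
| "bnd_lt scal (Lin cs a) NInf x = False"
| "bnd_lt scal (Lin cs a) PInf x = True"
| "bnd_lt scal (Lin cs a) (Lin ds b) x = (lval scal cs a x < lval scal ds b x)"

fun bnd_ok :: "nat \<Rightarrow> ('l,'r) bnd \<Rightarrow> bool" where
  "bnd_ok m (Lin cs a) = (length cs = m)"
| "bnd_ok m _ = True"

text \<open>A layer: the graph Gamma(f) of a linear map, or the band (f,g).\<close>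
datatype ('l,'r) layer = Gr "'l list" 'r | Bd "('l,'r) bnd" "('l,'r) bnd"

text \<open>A presented cell in R^n is a list of n layers, top (last coordinate) layer first;
the tail is the presentation of the base cell X in R^(n-1). The empty list presents R^0.\<close>
type_synonym ('l,'r) celld = "('l,'r) layer list"

fun cellset :: "('l \<Rightarrow> 'r::linordered_ab_group_add \<Rightarrow> 'r) \<Rightarrow> ('l,'r) celld \<Rightarrow> 'r list set" where
  "cellset scal [] = {[]}"
| "cellset scal (Gr cs a # d) = {x @ [lval scal cs a x] | x. x \<in> cellset scal d}"
| "cellset scal (Bd f g # d) = {x @ [y] | x y. x \<in> cellset scal d \<and> lo_lt scal f x y \<and> hi_gt scal g x y}"

fun valid_cell :: "('l \<Rightarrow> 'r::linordered_ab_group_add \<Rightarrow> 'r) \<Rightarrow> ('l,'r) celld \<Rightarrow> bool" where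
  "valid_cell scal [] = True"
| "valid_cell scal (Gr cs a # d) = (valid_cell scal d \<and> length cs = length d)"
| "valid_cell scal (Bd f g # d) = (valid_cell scal d \<and> bnd_ok (length d) f \<and> bnd_ok (length d) g
      \<and> (\<forall>x\<in>cellset scal d. bnd_lt scal f g x))"

fun lin_dec :: "('l \<Rightarrow> 'r::linordered_ab_group_add \<Rightarrow> 'r) \<Rightarrow> nat \<Rightarrow> ('l,'r) celld set \<Rightarrow> bool" where
  "lin_dec scal n C \<longleftrightarrow>
     finite C \<and>
     (\<forall>d\<in>C. valid_cell scal d \<and> length d = n \<and> cellset scal d \<noteq> {}) \<and>
     (\<forall>d\<in>C. \<forall>d'\<in>C. d \<noteq> d' \<longrightarrow> cellset scal d \<inter> cellset scal d' = {}) \<and>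
     \<Union>(cellset scal ` C) = Rn n \<and>
     (1 < n \<longrightarrow> lin_dec scal (n - 1) (tl ` C))"

definition lin_dec_of :: "('l \<Rightarrow> 'r::linordered_ab_group_add \<Rightarrow> 'r) \<Rightarrow> nat \<Rightarrow> 'r list set \<Rightarrow> ('l,'r) celld set \<Rightarrow> bool" where
  "lin_dec_of scal n Y D \<longleftrightarrow>
     (\<exists>C. lin_dec scal n C \<and>
          (\<forall>d\<in>C. cellset scal d \<subseteq> Y \<or> cellset scal d \<inter> Y = {}) \<and>
          D = {d\<in>C. cellset scal d \<inter> Y \<noteq> {}})"

definition cond_graphs :: "('l \<Rightarrow> 'r::linordered_ab_group_add \<Rightarrow> 'r) \<Rightarrow> ('l,'r) celld set \<Rightarrow> bool" where
  "cond_graphs scal D \<longleftrightarrow>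
     (\<forall>d\<in>D. \<forall>d'\<in>D. \<forall>cs a ds b. hd d = Gr cs a \<longrightarrow> hd d' = Gr ds b \<longrightarrow>
        (\<forall>V\<in>tl ` D.
           (\<forall>v\<in>cellset scal V. lval scal cs a v < lval scal ds b v) \<or>
           (\<forall>v\<in>cellset scal V. lval scal cs a v = lval scal ds b v) \<or>
           (\<forall>v\<in>cellset scal V. lval scal cs a v > lval scal ds b v)))"

definition cond_bands :: "('l \<Rightarrow> 'r::{linordered_ab_group_add,linorder_topology} \<Rightarrow> 'r) \<Rightarrow> nat \<Rightarrow> ('l,'r) celld set \<Rightarrow> bool" where
  "cond_bands scal m D \<longleftrightarrow>
     (\<forall>d\<in>D. \<forall>d'\<in>D. \<forall>hs h f g. hd d = Gr hs h \<longrightarrow> hd d' = Bd f g \<longrightarrow>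
        \<not> (\<exists>c \<in> cl m (cellset scal (tl d)) \<inter> cl m (cellset scal (tl d')).
              lo_lt scal f c (lval scal hs h c) \<and> hi_gt scal g c (lval scal hs h c)))"

fun special_dec :: "('l \<Rightarrow> 'r::{linordered_ab_group_add,linorder_topology} \<Rightarrow> 'r) \<Rightarrow> nat \<Rightarrow> 'r list set \<Rightarrow> ('l,'r) celld set \<Rightarrow> bool" where
  "special_dec scal n Y D \<longleftrightarrow>
     lin_dec_of scal n Y D \<and>
     (1 < n \<longrightarrow> special_dec scal (n - 1) (proj Y) (tl ` D) \<and>
                cond_graphs scal D \<and> cond_bands scal (n - 1) D)"

text \<open>A collection of subsets of R^n is a special linear decomposition of Y if its members
can be presented as linear cells (with their defining linear maps) so that the
presented collection is a special linear decomposition of Y.\<close>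
definition special_lin_dec :: "('l \<Rightarrow> 'r::{linordered_ab_group_add,linorder_topology} \<Rightarrow> 'r) \<Rightarrow> nat \<Rightarrow> 'r list set \<Rightarrow> 'r list set set \<Rightarrow> bool" where
  "special_lin_dec scal n Y \<C> \<longleftrightarrow> (\<exists>D. special_dec scal n Y D \<and> cellset scal ` D = \<C>)"

end

theory Submission
  imports Defs
begin

text \<open>Let M be the finite set of linear maps used by the decompositions that witness the
specialness of C, at all levels. Choose the box B \<supseteq> B1 coordinate by coordinate, so large
that every map of M in k variables takes values strictly between the (k+1)-st faces of B
on the k-dimensional box. Then intersecting a cell with B only replaces its infinite bounds
by faces of B, so the nonempty sets B \<inter> D are again linear cells. Conditions (2) and (3)
pass to them because their bases shrink and a bound changes only where it was infinite.
These cells are part of a linear decomposition of R^n: keep the cells above bases outside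
the box, and split bands with an infinite end above bases inside the box at the faces of B.\<close>

lemma inverse_two_pos: "0 < inverse (2::'l::{division_ring,linordered_ring_strict})"
  and inverse_two_add_self: "inverse 2 + inverse 2 = (1::'l::{division_ring,linordered_ring_strict})"
proof -
  have one_pos: "(0::'l) < 1"
    using zero_le_square[of "1::'l"] zero_neq_one[where 'a='l] by (simp add: order_le_less)
  then have two_pos: "(0::'l) < 2" by (metis add_pos_pos one_add_one)
  then have two_inv: "(2::'l) * inverse 2 = 1" by (intro right_inverse) simp
  then have "0 < (2::'l) * inverse 2" using one_pos by simp
  then show "0 < inverse (2::'l)"
    using two_pos unfolding zero_less_mult_iff by (meson less_asym)
  have "inverse 2 + inverse 2 = (2::'l) * inverse 2" by (metis one_add_one distrib_right mult_1)
  then show "inverse 2 + inverse 2 = (1::'l)" using two_inv by simp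
qed

context
  fixes scal :: "'l::{division_ring,linordered_ring_strict} \<Rightarrow> 'r::linordered_ab_group_add \<Rightarrow> 'r"
  assumes ovs: "ordered_vs scal"
begin

lemma ovs_add_left: "scal (p + q) x = scal p x + scal q x"
  using ovs by (simp add: ordered_vs_def)

lemma ovs_add_right: "scal p (x + y) = scal p x + scal p y"
  using ovs by (simp add: ordered_vs_def)

lemma ovs_one: "scal 1 x = x"
  using ovs by (simp add: ordered_vs_def)

lemma ovs_pos: "0 < p \<Longrightarrow> 0 < x \<Longrightarrow> 0 < scal p x"
  using ovs by (simp add: ordered_vs_def)

lemma ovs_zero_left: "scal 0 x = 0"
  using ovs_add_left[of 0 0 x] by simp

lemma ovs_diff_right: "scal p (y - x) = scal p y - scal p x"
  using ovs_add_right[of p "y - x" x] by (simp add: algebra_simps)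

lemma ovs_uminus_left: "scal (- p) x = - scal p x"
  using ovs_add_left[of p "- p" x] ovs_zero_left[of x] by (simp add: eq_neg_iff_add_eq_0 add.commute)

lemma ovs_strict_mono: "0 < p \<Longrightarrow> x < y \<Longrightarrow> scal p x < scal p y"
  using ovs_pos[of p "y - x"] ovs_diff_right[of p y x] by simp

lemma ovs_strict_antimono: "p < 0 \<Longrightarrow> x < y \<Longrightarrow> scal p y < scal p x"
  using ovs_strict_mono[of "- p" x y] ovs_uminus_left[of p] by simp

lemma ovs_between_min_max:
  assumes "u < y" "y < v"
  shows "min (scal p u) (scal p v) \<le> scal p y \<and> scal p y \<le> max (scal p u) (scal p v)"
proof -
  consider "p = 0" | "0 < p" | "p < 0" by (meson linorder_neqE)
  then show ?thesis
  proof cases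
    case 1
    then show ?thesis using ovs_zero_left by simp
  next
    case 2
    then show ?thesis using ovs_strict_mono[OF 2] assms by (simp add: less_imp_le)
  next
    case 3
    then show ?thesis using ovs_strict_antimono[OF 3] assms by (simp add: less_imp_le)
  qed
qed

lemma ovs_dense:
  fixes u v :: 'r
  assumes "u < v"
  shows "\<exists>w. u < w \<and> w < v"
proof -
  define h where "h = scal (inverse 2) (v - u)"
  have h_pos: "0 < h" unfolding h_def using ovs_pos[OF inverse_two_pos] assms by simp
  have "h + h = v - u"
    using ovs_add_left[of "inverse 2" "inverse 2" "v - u"] inverse_two_add_self[where 'l='l] ovs_one
    unfolding h_def by (simp del: inverse_eq_divide)
  then have "h < v - u" using h_pos by (metis less_add_same_cancel1)
  then show ?thesis using h_pos by (intro exI[of _ "u + h"]) (simp add: algebra_simps)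
qed

lemma lval_replicate_zero: "length x = k \<Longrightarrow> lval scal (replicate k 0) c x = c"
  by (induct x arbitrary: k) (auto simp: lval_def ovs_zero_left)

end

fun bnd_maps :: "('l,'r) bnd \<Rightarrow> ('l list \<times> 'r) set" where
  "bnd_maps (Lin cs c) = {(cs, c)}"
| "bnd_maps NInf = {}"
| "bnd_maps PInf = {}"

fun layer_maps :: "('l,'r) layer \<Rightarrow> ('l list \<times> 'r) set" where
  "layer_maps (Gr cs c) = {(cs, c)}"
| "layer_maps (Bd f g) = bnd_maps f \<union> bnd_maps g"

fun cell_maps :: "('l,'r) celld \<Rightarrow> ('l list \<times> 'r) set" where
  "cell_maps [] = {}"
| "cell_maps (L # d) = layer_maps L \<union> cell_maps d"

fun in_layer :: "('l \<Rightarrow> 'r::linordered_ab_group_add \<Rightarrow> 'r) \<Rightarrow> ('l,'r) layer \<Rightarrow> 'r list \<Rightarrow> 'r \<Rightarrow> bool" where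
  "in_layer scal (Gr cs c) x y = (y = lval scal cs c x)"
| "in_layer scal (Bd f g) x y = (lo_lt scal f x y \<and> hi_gt scal g x y)"

fun layer_arity :: "nat \<Rightarrow> ('l,'r) layer \<Rightarrow> bool" where
  "layer_arity k (Gr cs c) = (length cs = k)"
| "layer_arity k (Bd f g) = (bnd_ok k f \<and> bnd_ok k g)"

fun layer_proper :: "('l \<Rightarrow> 'r::linordered_ab_group_add \<Rightarrow> 'r) \<Rightarrow> ('l,'r) layer \<Rightarrow> 'r list \<Rightarrow> bool" where
  "layer_proper scal (Gr cs c) x = True"
| "layer_proper scal (Bd f g) x = bnd_lt scal f g x"

lemma finite_cell_maps: "finite (cell_maps d)"
proof -
  have "finite (bnd_maps f)" for f :: "('l,'r) bnd" by (cases f) auto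
  then have "finite (layer_maps L)" for L :: "('l,'r) layer" by (cases L) auto
  then show ?thesis by (induct d) auto
qed

lemma cell_maps_tl: "cell_maps (tl d) \<subseteq> cell_maps d"
  by (cases d) auto

lemma cellset_Cons: "cellset scal (L # d) = {x @ [y] | x y. x \<in> cellset scal d \<and> in_layer scal L x y}"
  by (cases L) auto

lemma snoc_in_cellset_Cons: "x @ [y] \<in> cellset scal (L # d) \<longleftrightarrow> x \<in> cellset scal d \<and> in_layer scal L x y"
  unfolding cellset_Cons by auto

lemma in_cellset_Cons:
  "z \<in> cellset scal (L # d) \<longleftrightarrow> (\<exists>x y. z = x @ [y] \<and> x \<in> cellset scal d \<and> in_layer scal L x y)"
  unfolding cellset_Cons by auto

lemma length_cellset: "z \<in> cellset scal d \<Longrightarrow> length z = length d"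
  by (induct d arbitrary: z) (auto simp: in_cellset_Cons)

lemma valid_cell_Cons:
  "valid_cell scal (L # d) \<longleftrightarrow>
     valid_cell scal d \<and> layer_arity (length d) L \<and> (\<forall>x\<in>cellset scal d. layer_proper scal L x)"
  by (cases L) auto

lemma lo_lt_hi_gt_witness:
  fixes scal :: "'l::{division_ring,linordered_ring_strict} \<Rightarrow> 'r::linordered_ab_group_add \<Rightarrow> 'r"
  assumes ovs: "ordered_vs scal" and e: "0 < (e::'r)" and "bnd_lt scal f g x"
  shows "\<exists>y. lo_lt scal f x y \<and> hi_gt scal g x y"
proof -
  have above: "\<exists>y. u < y" for u :: 'r using e by (metis less_add_same_cancel1)
  have below: "\<exists>y. y < u" for u :: 'r using e by (intro exI[of _ "u - e"]) simp
  show ?thesis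
  proof (cases f)
    case NInf
    then show ?thesis using assms(3) below by (cases g) auto
  next
    case PInf
    then show ?thesis using assms(3) by simp
  next
    case (Lin cs c)
    then show ?thesis using assms(3) above ovs_dense[OF ovs] by (cases g) auto
  qed
qed

lemma in_layer_witness:
  fixes scal :: "'l::{division_ring,linordered_ring_strict} \<Rightarrow> 'r::linordered_ab_group_add \<Rightarrow> 'r"
  assumes "ordered_vs scal" and "0 < (e::'r)" and "layer_proper scal L x"
  shows "\<exists>y. in_layer scal L x y"
  using assms lo_lt_hi_gt_witness[OF assms(1,2)] by (cases L) auto

lemma cl_mono: "S \<subseteq> T \<Longrightarrow> cl m S \<subseteq> cl m T"
  unfolding cl_def by blast

declare lin_dec.simps[simp del] special_dec.simps[simp del]

lemma lin_dec_D:
  assumes "lin_dec scal k C"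
  shows "finite C" "\<And>d. d\<in>C \<Longrightarrow> valid_cell scal d" "\<And>d. d\<in>C \<Longrightarrow> length d = k"
    "\<And>d. d\<in>C \<Longrightarrow> cellset scal d \<noteq> {}"
    "\<And>d d'. d\<in>C \<Longrightarrow> d'\<in>C \<Longrightarrow> d \<noteq> d' \<Longrightarrow> cellset scal d \<inter> cellset scal d' = {}"
    "\<Union>(cellset scal ` C) = Rn k" "1 < k \<Longrightarrow> lin_dec scal (k - 1) (tl ` C)"
  using assms[unfolded lin_dec.simps[of scal k]] by auto

lemma lin_dec_I:
  assumes "finite C" "\<And>d. d\<in>C \<Longrightarrow> valid_cell scal d" "\<And>d. d\<in>C \<Longrightarrow> length d = k"
    "\<And>d. d\<in>C \<Longrightarrow> cellset scal d \<noteq> {}"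
    "\<And>d d'. d\<in>C \<Longrightarrow> d'\<in>C \<Longrightarrow> d \<noteq> d' \<Longrightarrow> cellset scal d \<inter> cellset scal d' = {}"
    "\<Union>(cellset scal ` C) = Rn k" "1 < k \<Longrightarrow> lin_dec scal (k - 1) (tl ` C)"
  shows "lin_dec scal k C"
  using assms by (subst lin_dec.simps) blast

lemma lin_dec_0_iff: "lin_dec scal 0 C \<longleftrightarrow> C = {[]}"
proof
  assume dec: "lin_dec scal 0 C"
  have "[] \<in> \<Union>(cellset scal ` C)" using lin_dec_D(6)[OF dec] by (simp add: Rn_def)
  then show "C = {[]}" using lin_dec_D(3)[OF dec] by auto
qed (auto intro: lin_dec_I simp: Rn_def)

lemma lin_dec_tl:
  assumes "lin_dec scal (Suc k) C"
  shows "lin_dec scal k (tl ` C)"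
proof (cases k)
  case 0
  have "tl d = []" if "d \<in> C" for d
    using lin_dec_D(3)[OF assms that] 0 by (cases d) auto
  moreover have "replicate (Suc k) undefined \<in> \<Union>(cellset scal ` C)"
    using lin_dec_D(6)[OF assms] by (simp add: Rn_def)
  then have "C \<noteq> {}" by auto
  ultimately have "tl ` C = {[]}" by auto
  then show ?thesis using 0 lin_dec_0_iff by auto
next
  case (Suc m)
  then show ?thesis using lin_dec_D(7)[OF assms] by simp
qed

section \<open>Cutting cells with a box\<close>

definition open_box :: "'r::linorder list \<Rightarrow> 'r list \<Rightarrow> nat \<Rightarrow> 'r list set" where
  "open_box a b k = {x. length x = k \<and> (\<forall>i<k. a ! i < x ! i \<and> x ! i < b ! i)}"

lemma open_box_0: "open_box a b 0 = {[]}"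
  unfolding open_box_def by auto

lemma length_open_box: "x \<in> open_box a b k \<Longrightarrow> length x = k"
  unfolding open_box_def by auto

lemma snoc_in_open_box: "x @ [y] \<in> open_box a b (Suc k) \<longleftrightarrow> x \<in> open_box a b k \<and> a ! k < y \<and> y < b ! k"
  unfolding open_box_def by (auto simp: nth_append less_Suc_eq)

lemma butlast_in_open_box:
  assumes "z \<in> open_box a b (Suc k)"
  shows "butlast z \<in> open_box a b k"
proof -
  have "z \<noteq> []" using assms length_open_box by fastforce
  then have "butlast z @ [last z] \<in> open_box a b (Suc k)" using assms by simp
  then show ?thesis unfolding snoc_in_open_box by simp
qed

lemma open_box_append: "k \<le> length a \<Longrightarrow> k \<le> length b \<Longrightarrow> open_box (a @ a') (b @ b') k = open_box a b k"
  unfolding open_box_def by (auto simp: nth_append)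

text \<open>Cutting a cell with a box that encloses the maps of the cell only requires
replacing its infinite bounds by the faces of the box (coordinates are indexed from 0).\<close>
definition box_encloses :: "('l \<Rightarrow> 'r::linordered_ab_group_add \<Rightarrow> 'r) \<Rightarrow> 'r list \<Rightarrow> 'r list \<Rightarrow> nat
    \<Rightarrow> ('l list \<times> 'r) set \<Rightarrow> bool" where
  "box_encloses scal a b m M \<longleftrightarrow>
     (\<forall>cs c x. (cs, c) \<in> M \<longrightarrow> length cs < m \<longrightarrow> x \<in> open_box a b (length cs) \<longrightarrow>
        a ! length cs < lval scal cs c x \<and> lval scal cs c x < b ! length cs)"

fun cut_lower :: "'r \<Rightarrow> nat \<Rightarrow> ('l::zero,'r) bnd \<Rightarrow> ('l,'r) bnd" where
  "cut_lower a k NInf = Lin (replicate k 0) a"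
| "cut_lower a k (Lin cs c) = Lin cs c"
| "cut_lower a k PInf = PInf"

fun cut_upper :: "'r \<Rightarrow> nat \<Rightarrow> ('l::zero,'r) bnd \<Rightarrow> ('l,'r) bnd" where
  "cut_upper b k PInf = Lin (replicate k 0) b"
| "cut_upper b k (Lin cs c) = Lin cs c"
| "cut_upper b k NInf = NInf"

fun cut_layer :: "'r \<Rightarrow> 'r \<Rightarrow> nat \<Rightarrow> ('l::zero,'r) layer \<Rightarrow> ('l,'r) layer" where
  "cut_layer a b k (Gr cs c) = Gr cs c"
| "cut_layer a b k (Bd f g) = Bd (cut_lower a k f) (cut_upper b k g)"

fun cut_cell :: "'r list \<Rightarrow> 'r list \<Rightarrow> ('l::zero,'r) celld \<Rightarrow> ('l,'r) celld" where
  "cut_cell a b [] = []"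
| "cut_cell a b (L # d) = cut_layer (a ! length d) (b ! length d) (length d) L # cut_cell a b d"

lemma length_cut_cell[simp]: "length (cut_cell a b d) = length d"
  by (induct d) auto

lemma tl_cut_cell: "tl (cut_cell a b d) = cut_cell a b (tl d)"
  by (cases d) auto

lemma hd_cut_cell_Gr: "hd (cut_cell a b d) = Gr cs c \<Longrightarrow> hd d = Gr cs c"
  by (cases d; cases "hd d") auto

lemma hd_cut_cell_Bd:
  assumes "hd (cut_cell a b d) = Bd f' g'" "d \<noteq> []"
  obtains f g d0 where "d = Bd f g # d0"
    "f' = cut_lower (a ! length d0) (length d0) f" "g' = cut_upper (b ! length d0) (length d0) g"
  using assms by (cases d; cases "hd d") auto

lemma lo_lt_cut_lower: "lo_lt scal (cut_lower a k f) x y \<Longrightarrow> lo_lt scal f x y"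
  by (cases f) auto

lemma hi_gt_cut_upper: "hi_gt scal (cut_upper b k g) x y \<Longrightarrow> hi_gt scal g x y"
  by (cases g) auto

text \<open>The layers replacing L above a base cell that lies inside the box (first case) or
outside it (second case). A band with an infinite end is split at the faces of the box into
the band inside the box and up to four layers outside it.\<close>
fun split_layer :: "'r \<Rightarrow> 'r \<Rightarrow> nat \<Rightarrow> ('l::zero,'r) layer \<Rightarrow> bool \<Rightarrow> ('l,'r) layer set" where
  "split_layer a b k (Gr cs c) in_box = {Gr cs c}"
| "split_layer a b k (Bd f g) in_box =
     (if in_box then {Bd (cut_lower a k f) (cut_upper b k g)}
        \<union> (if f = NInf then {Bd NInf (Lin (replicate k 0) a), Gr (replicate k 0) a} else {})
        \<union> (if g = PInf then {Gr (replicate k 0) b, Bd (Lin (replicate k 0) b) PInf} else {})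
      else {Bd f g})"

lemma cut_layer_in_split_layer: "cut_layer a b k L \<in> split_layer a b k L True"
  by (cases L) auto

lemma finite_split_layer: "finite (split_layer a b k L in_box)"
  by (cases L) auto

section \<open>Special decompositions over a finite set of linear maps\<close>

text \<open>A single finite M bounding the linear maps of all witnessing decompositions, at every
level, is what the box has to enclose.\<close>
fun special_dec_over :: "('l \<Rightarrow> 'r::{linordered_ab_group_add,linorder_topology} \<Rightarrow> 'r) \<Rightarrow> nat
    \<Rightarrow> 'r list set \<Rightarrow> ('l,'r) celld set \<Rightarrow> ('l list \<times> 'r) set \<Rightarrow> bool" where
  "special_dec_over scal k Y D M \<longleftrightarrow>
     (\<exists>C. lin_dec scal k C \<and> (\<forall>d\<in>C. cellset scal d \<subseteq> Y \<or> cellset scal d \<inter> Y = {}) \<and>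
          D = {d\<in>C. cellset scal d \<inter> Y \<noteq> {}} \<and> (\<forall>d\<in>C. cell_maps d \<subseteq> M)) \<and>
     (1 < k \<longrightarrow> special_dec_over scal (k - 1) (proj Y) (tl ` D) M \<and>
                cond_graphs scal D \<and> cond_bands scal (k - 1) D)"

declare special_dec_over.simps[simp del]

lemma special_dec_overE:
  assumes "special_dec_over scal k Y D M"
  obtains C where "lin_dec scal k C" "\<forall>d\<in>C. cellset scal d \<subseteq> Y \<or> cellset scal d \<inter> Y = {}"
    "D = {d\<in>C. cellset scal d \<inter> Y \<noteq> {}}" "\<forall>d\<in>C. cell_maps d \<subseteq> M"
  using assms[unfolded special_dec_over.simps[of scal k]] by auto

lemma special_dec_over_tl:
  "special_dec_over scal k Y D M \<Longrightarrow> 1 < k \<Longrightarrow>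
     special_dec_over scal (k - 1) (proj Y) (tl ` D) M \<and> cond_graphs scal D \<and> cond_bands scal (k - 1) D"
  by (simp add: special_dec_over.simps[of scal k])

lemma special_dec_over_cells:
  "special_dec_over scal k Y D M \<Longrightarrow> d \<in> D \<Longrightarrow> valid_cell scal d \<and> length d = k \<and> cell_maps d \<subseteq> M"
  by (elim special_dec_overE) (use lin_dec_D(2,3) in blast)

lemma special_dec_over_mono:
  "special_dec_over scal k Y D M \<Longrightarrow> M \<subseteq> M' \<Longrightarrow> special_dec_over scal k Y D M'"
proof (induct k arbitrary: Y D)
  case 0
  then show ?case unfolding special_dec_over.simps[of scal 0] by blast
next
  case (Suc k)
  obtain C where "lin_dec scal (Suc k) C" "\<forall>d\<in>C. cellset scal d \<subseteq> Y \<or> cellset scal d \<inter> Y = {}"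
    "D = {d\<in>C. cellset scal d \<inter> Y \<noteq> {}}" "\<forall>d\<in>C. cell_maps d \<subseteq> M"
    using Suc.prems(1) by (rule special_dec_overE)
  then have "\<exists>C. lin_dec scal (Suc k) C \<and> (\<forall>d\<in>C. cellset scal d \<subseteq> Y \<or> cellset scal d \<inter> Y = {}) \<and>
      D = {d\<in>C. cellset scal d \<inter> Y \<noteq> {}} \<and> (\<forall>d\<in>C. cell_maps d \<subseteq> M')"
    using Suc.prems(2) by blast
  moreover have "1 < Suc k \<longrightarrow> special_dec_over scal k (proj Y) (tl ` D) M'
      \<and> cond_graphs scal D \<and> cond_bands scal k D"
    using Suc special_dec_over_tl[OF Suc.prems(1)] by simp
  ultimately show ?case
    unfolding special_dec_over.simps[of scal "Suc k"] by simp
qed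

lemma special_dec_over_finite:
  "special_dec scal k Y D \<Longrightarrow> \<exists>M. finite M \<and> special_dec_over scal k Y D M"
proof (induct k arbitrary: Y D)
  case 0
  then obtain C where "lin_dec scal 0 C" "\<forall>d\<in>C. cellset scal d \<subseteq> Y \<or> cellset scal d \<inter> Y = {}"
    "D = {d\<in>C. cellset scal d \<inter> Y \<noteq> {}}"
    unfolding special_dec.simps[of scal 0] lin_dec_of_def by blast
  then have "special_dec_over scal 0 Y D (\<Union>d\<in>C. cell_maps d)"
    unfolding special_dec_over.simps[of scal 0] by blast
  moreover have "finite (\<Union>d\<in>C. cell_maps d)"
    using lin_dec_D(1)[OF \<open>lin_dec scal 0 C\<close>] finite_cell_maps by blast
  ultimately show ?case by blast
next
  case (Suc k)
  have dec: "lin_dec_of scal (Suc k) Y D"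
    and rest: "1 < Suc k \<longrightarrow> special_dec scal k (proj Y) (tl ` D) \<and> cond_graphs scal D \<and> cond_bands scal k D"
    using Suc.prems[unfolded special_dec.simps[of scal "Suc k"]] by auto
  obtain C where C: "lin_dec scal (Suc k) C" "\<forall>d\<in>C. cellset scal d \<subseteq> Y \<or> cellset scal d \<inter> Y = {}"
    "D = {d\<in>C. cellset scal d \<inter> Y \<noteq> {}}"
    using dec unfolding lin_dec_of_def by blast
  define M1 where "M1 = (\<Union>d\<in>C. cell_maps d)"
  have "finite M1" unfolding M1_def using lin_dec_D(1)[OF C(1)] finite_cell_maps by blast
  obtain M2 where M2: "finite M2" "1 < Suc k \<longrightarrow> special_dec_over scal k (proj Y) (tl ` D) M2"
    using Suc.hyps rest by (cases "1 < Suc k") blast+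
  have "\<exists>C. lin_dec scal (Suc k) C \<and> (\<forall>d\<in>C. cellset scal d \<subseteq> Y \<or> cellset scal d \<inter> Y = {}) \<and>
      D = {d\<in>C. cellset scal d \<inter> Y \<noteq> {}} \<and> (\<forall>d\<in>C. cell_maps d \<subseteq> M1 \<union> M2)"
    using C unfolding M1_def by blast
  moreover have "1 < Suc k \<longrightarrow> special_dec_over scal k (proj Y) (tl ` D) (M1 \<union> M2)"
    using M2(2) special_dec_over_mono[of scal k "proj Y" "tl ` D" M2 "M1 \<union> M2"] by blast
  ultimately have "special_dec_over scal (Suc k) Y D (M1 \<union> M2)"
    using rest unfolding special_dec_over.simps[of scal "Suc k"] by simp
  then show ?case using \<open>finite M1\<close> M2(1) by blast
qed

locale large_box =
  fixes scal :: "'l::{division_ring,linordered_ring_strict} \<Rightarrow> 'r::{linordered_ab_group_add,linorder_topology} \<Rightarrow> 'r"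
    and a b :: "'r list" and n :: nat and M :: "('l list \<times> 'r) set"
  assumes ovs: "ordered_vs scal"
    and corners_less: "\<And>i. i < n \<Longrightarrow> a ! i < b ! i"
    and encloses: "box_encloses scal a b n M"
begin

lemma lval_between_faces:
  "(cs, c) \<in> M \<Longrightarrow> length cs = k \<Longrightarrow> k < n \<Longrightarrow> x \<in> open_box a b k \<Longrightarrow>
    a ! k < lval scal cs c x \<and> lval scal cs c x < b ! k"
  using encloses unfolding box_encloses_def by blast

lemma lval_replicate_zero_box: "x \<in> open_box a b k \<Longrightarrow> lval scal (replicate k 0) c x = c"
  using lval_replicate_zero[OF ovs] length_open_box by blast

lemma lo_lt_cut_lower_iff:
  assumes "k < n" "x \<in> open_box a b k" "bnd_ok k f" "bnd_maps f \<subseteq> M"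
  shows "lo_lt scal (cut_lower (a ! k) k f) x y \<longleftrightarrow> lo_lt scal f x y \<and> a ! k < y"
  using assms lval_between_faces lval_replicate_zero_box by (cases f) force+

lemma hi_gt_cut_upper_iff:
  assumes "k < n" "x \<in> open_box a b k" "bnd_ok k g" "bnd_maps g \<subseteq> M"
  shows "hi_gt scal (cut_upper (b ! k) k g) x y \<longleftrightarrow> hi_gt scal g x y \<and> y < b ! k"
  using assms lval_between_faces lval_replicate_zero_box by (cases g) force+

lemma lo_lt_above_face:
  "k < n \<Longrightarrow> x \<in> open_box a b k \<Longrightarrow> bnd_ok k f \<Longrightarrow> bnd_maps f \<subseteq> M \<Longrightarrow> f \<noteq> NInf \<Longrightarrow>
    lo_lt scal f x y \<Longrightarrow> a ! k < y"
  using lo_lt_cut_lower_iff[of k x f y] by (cases f) auto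

lemma hi_gt_below_face:
  "k < n \<Longrightarrow> x \<in> open_box a b k \<Longrightarrow> bnd_ok k g \<Longrightarrow> bnd_maps g \<subseteq> M \<Longrightarrow> g \<noteq> PInf \<Longrightarrow>
    hi_gt scal g x y \<Longrightarrow> y < b ! k"
  using hi_gt_cut_upper_iff[of k x g y] by (cases g) auto

lemma lo_lt_beyond_upper_face:
  "k < n \<Longrightarrow> x \<in> open_box a b k \<Longrightarrow> bnd_ok k f \<Longrightarrow> bnd_maps f \<subseteq> M \<Longrightarrow> f \<noteq> PInf \<Longrightarrow>
    b ! k \<le> y \<Longrightarrow> lo_lt scal f x y"
  using lval_between_faces by (cases f) force+

lemma hi_gt_beyond_lower_face:
  "k < n \<Longrightarrow> x \<in> open_box a b k \<Longrightarrow> bnd_ok k g \<Longrightarrow> bnd_maps g \<subseteq> M \<Longrightarrow> g \<noteq> NInf \<Longrightarrow>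
    y \<le> a ! k \<Longrightarrow> hi_gt scal g x y"
  using lval_between_faces by (cases g) force+

lemma in_cut_layer_iff:
  assumes "k < n" "x \<in> open_box a b k" "layer_arity k L" "layer_maps L \<subseteq> M"
  shows "in_layer scal (cut_layer (a ! k) (b ! k) k L) x y \<longleftrightarrow> in_layer scal L x y \<and> a ! k < y \<and> y < b ! k"
  using assms lval_between_faces[of _ _ k x] lo_lt_cut_lower_iff[of k x _ y] hi_gt_cut_upper_iff[of k x _ y]
  by (cases L) auto

lemma cut_layer_proper:
  assumes "k < n" "x \<in> open_box a b k" "layer_arity k L" "layer_maps L \<subseteq> M" "layer_proper scal L x"
  shows "layer_proper scal (cut_layer (a ! k) (b ! k) k L) x"
proof (cases L)
  case (Bd f g)
  have "a ! k < b ! k" using corners_less assms(1) .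
  then show ?thesis
    using Bd assms lval_between_faces[of _ _ k x] lval_replicate_zero_box[OF assms(2)]
    by (cases f; cases g) auto
qed simp

lemma cellset_cut_cell:
  "valid_cell scal d \<Longrightarrow> length d \<le> n \<Longrightarrow> cell_maps d \<subseteq> M \<Longrightarrow>
    cellset scal (cut_cell a b d) = cellset scal d \<inter> open_box a b (length d)"
proof (induct d)
  case Nil
  then show ?case by (simp add: open_box_0)
next
  case (Cons L d)
  have L: "valid_cell scal d" "layer_arity (length d) L" "layer_maps L \<subseteq> M"
    using Cons.prems valid_cell_Cons by auto
  have IH: "cellset scal (cut_cell a b d) = cellset scal d \<inter> open_box a b (length d)"
    using Cons L by auto
  show ?case
    using IH in_cut_layer_iff[of "length d" _ L] L Cons.prems
    by (auto simp: in_cellset_Cons snoc_in_open_box)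
qed

lemma valid_cut_cell:
  "valid_cell scal d \<Longrightarrow> length d \<le> n \<Longrightarrow> cell_maps d \<subseteq> M \<Longrightarrow> valid_cell scal (cut_cell a b d)"
proof (induct d)
  case (Cons L d)
  have L: "valid_cell scal d" "layer_arity (length d) L" "\<forall>x\<in>cellset scal d. layer_proper scal L x"
    using Cons.prems(1) valid_cell_Cons by auto
  have "layer_arity (length d) (cut_layer (a ! length d) (b ! length d) (length d) L)"
    using L(2) by (cases L; auto elim!: bnd_ok.elims)
  then show ?case
    using Cons L cellset_cut_cell cut_layer_proper[of "length d" _ L] by (auto simp: valid_cell_Cons)
qed simp

lemma cut_cell_fibre:
  assumes "valid_cell scal (L # d)" "length (L # d) \<le> n" "cell_maps (L # d) \<subseteq> M"
    "x \<in> cellset scal (cut_cell a b d)"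
  shows "\<exists>y. x @ [y] \<in> cellset scal (cut_cell a b (L # d))"
proof -
  have "0 < b ! 0 - a ! 0" using corners_less[of 0] assms(2) by simp
  moreover have "valid_cell scal (cut_cell a b (L # d))" using valid_cut_cell assms(1-3) by blast
  then have "layer_proper scal (cut_layer (a ! length d) (b ! length d) (length d) L) x"
    using assms(4) by (simp add: valid_cell_Cons)
  ultimately show ?thesis
    using in_layer_witness[OF ovs] assms(4) by (fastforce simp: snoc_in_cellset_Cons)
qed

lemma in_split_layer_imp_in_layer:
  assumes "k < n" "layer_arity k L0" "layer_maps L0 \<subseteq> M" "in_box \<Longrightarrow> x \<in> open_box a b k"
    and "L \<in> split_layer (a ! k) (b ! k) k L0 in_box" "in_layer scal L x y" "layer_proper scal L0 x"
  shows "in_layer scal L0 x y"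
proof (cases L0)
  case (Bd f g)
  show ?thesis
  proof (cases in_box)
    case True
    then have x: "x \<in> open_box a b k" using assms by auto
    have fg: "bnd_ok k f" "bnd_maps f \<subseteq> M" "bnd_ok k g" "bnd_maps g \<subseteq> M" "f \<noteq> PInf" "g \<noteq> NInf"
      using assms Bd by (auto elim: bnd_lt.elims)
    show ?thesis
      using assms(5,6) True Bd corners_less[OF assms(1)] lval_replicate_zero_box[OF x]
        lo_lt_cut_lower_iff[OF assms(1) x fg(1,2)] hi_gt_cut_upper_iff[OF assms(1) x fg(3,4)]
        lo_lt_beyond_upper_face[OF assms(1) x fg(1,2,5)] hi_gt_beyond_lower_face[OF assms(1) x fg(3,4,6)]
      by (auto split: if_splits)
  qed (use assms Bd in auto)
qed (use assms in auto)

lemma split_layer_cover: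
  assumes "k < n" "layer_arity k L0" "layer_maps L0 \<subseteq> M" "in_box \<Longrightarrow> x \<in> open_box a b k"
    and "in_layer scal L0 x y"
  shows "\<exists>L\<in>split_layer (a ! k) (b ! k) k L0 in_box. in_layer scal L x y"
proof (cases L0)
  case (Bd f g)
  show ?thesis
  proof (cases in_box)
    case True
    then have x: "x \<in> open_box a b k" using assms by auto
    have fg: "bnd_ok k f" "bnd_maps f \<subseteq> M" "bnd_ok k g" "bnd_maps g \<subseteq> M"
      using assms Bd by auto
    have lo: "lo_lt scal f x y" and hi: "hi_gt scal g x y" using assms(5) Bd by auto
    have below: "f = NInf" if "y \<le> a ! k"
      using lo_lt_above_face[OF assms(1) x fg(1,2) _ lo] that by force
    have above: "g = PInf" if "b ! k \<le> y"
      using hi_gt_below_face[OF assms(1) x fg(3,4) _ hi] that by force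
    show ?thesis
    proof (cases "a ! k < y \<and> y < b ! k")
      case True
      then show ?thesis using \<open>in_box\<close> Bd lo hi
          lo_lt_cut_lower_iff[OF assms(1) x fg(1,2)] hi_gt_cut_upper_iff[OF assms(1) x fg(3,4)]
        by auto
    next
      case False
      then consider "y < a ! k" | "y = a ! k" | "y = b ! k" | "b ! k < y" by fastforce
      then show ?thesis
        by cases (use \<open>in_box\<close> Bd below above lval_replicate_zero_box[OF x] in auto)
    qed
  qed (use assms Bd in auto)
qed (use assms in auto)

lemma split_layer_unique:
  assumes "k < n" "layer_arity k L0" "layer_maps L0 \<subseteq> M" "in_box \<Longrightarrow> x \<in> open_box a b k"
    and "L \<in> split_layer (a ! k) (b ! k) k L0 in_box" "L' \<in> split_layer (a ! k) (b ! k) k L0 in_box"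
    and "in_layer scal L x y" "in_layer scal L' x y"
  shows "L = L'"
proof (cases L0)
  case (Bd f g)
  show ?thesis
  proof (cases in_box)
    case True
    then have x: "x \<in> open_box a b k" using assms by auto
    have fg: "bnd_ok k f" "bnd_maps f \<subseteq> M" "bnd_ok k g" "bnd_maps g \<subseteq> M"
      using assms Bd by auto
    show ?thesis
      using assms(5-8) True Bd lval_replicate_zero_box[OF x] corners_less[OF assms(1)]
        lo_lt_cut_lower_iff[OF assms(1) x fg(1,2)] hi_gt_cut_upper_iff[OF assms(1) x fg(3,4)]
      by (auto split: if_splits)
  qed (use assms Bd in auto)
qed (use assms in auto)

lemma split_layer_outside_box:
  assumes "x \<in> open_box a b k" "L \<in> split_layer (a ! k) (b ! k) k L0 True"
    "L \<noteq> cut_layer (a ! k) (b ! k) k L0" "in_layer scal L x y"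
  shows "\<not> (a ! k < y \<and> y < b ! k)"
  using assms lval_replicate_zero_box[OF assms(1)] by (cases L0) (auto split: if_splits)

lemma split_layer_proper:
  assumes "k < n" "layer_arity k L0" "layer_maps L0 \<subseteq> M" "in_box \<Longrightarrow> x \<in> open_box a b k"
    and "layer_proper scal L0 x" "L \<in> split_layer (a ! k) (b ! k) k L0 in_box"
  shows "layer_arity k L \<and> layer_proper scal L x"
proof (cases L0)
  case (Bd f g)
  show ?thesis
  proof (cases in_box)
    case True
    then have x: "x \<in> open_box a b k" using assms by auto
    have "layer_proper scal (cut_layer (a ! k) (b ! k) k L0) x"
      using cut_layer_proper[OF assms(1) x assms(2,3,5)] .
    moreover have "layer_arity k (cut_layer (a ! k) (b ! k) k L0)"
      using assms(2) Bd by (auto elim!: bnd_ok.elims)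
    ultimately show ?thesis
      using assms(6) True Bd lval_replicate_zero_box[OF x] corners_less[OF assms(1)]
      by (auto split: if_splits)
  qed (use assms Bd in auto)
qed (use assms in auto)

end

section \<open>Completing the cut cells to a decomposition\<close>

text \<open>The cut cells only cover the box, whereas lin_dec_of asks for a linear decomposition of
all of R^k that contains them.\<close>
definition box_refinement :: "('l::zero \<Rightarrow> 'r::linordered_ab_group_add \<Rightarrow> 'r) \<Rightarrow> 'r list \<Rightarrow> 'r list \<Rightarrow> nat
    \<Rightarrow> ('l,'r) celld set \<Rightarrow> ('l,'r) celld set \<Rightarrow> bool" where
  "box_refinement scal a b k C C' \<longleftrightarrow> lin_dec scal k C' \<and>
     (\<forall>d\<in>C. cellset scal (cut_cell a b d) \<noteq> {} \<longrightarrow> cut_cell a b d \<in> C') \<and>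
     (\<forall>q\<in>C'. \<exists>d\<in>C. cellset scal q \<subseteq> cellset scal d \<and>
        (q = cut_cell a b d \<or> cellset scal q \<inter> open_box a b k = {}))"

locale box_refinement_step = large_box +
  fixes k :: nat and C P :: "('l::{division_ring,linordered_ring_strict}, 'r::{linordered_ab_group_add,linorder_topology}) celld set"
  assumes k_less: "k < n"
    and dec: "lin_dec scal (Suc k) C"
    and maps_C: "\<And>d. d \<in> C \<Longrightarrow> cell_maps d \<subseteq> M"
    and base: "box_refinement scal a b k (tl ` C) P"
begin

text \<open>Each cell p of the refined base lies in the base d0 of a cell L0 # d0 of C, and
inside the box iff p is the cut of d0; only then is L0 split at the faces of the box.\<close>
definition lifted :: "('l,'r) celld set" where
  "lifted = {L # p | L p. p \<in> P \<and> (\<exists>L0 d0. L0 # d0 \<in> C \<and> cellset scal p \<subseteq> cellset scal d0 \<and>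
      L \<in> split_layer (a ! k) (b ! k) k L0 (p = cut_cell a b d0))}"

lemma base_dec: "lin_dec scal k P"
  using base unfolding box_refinement_def by blast

lemma cell_of_C_ConsE:
  assumes "d \<in> C"
  obtains L0 d0 where "d = L0 # d0"
  using lin_dec_D(3)[OF dec assms] by (cases d) auto

lemma cell_of_C:
  assumes "L0 # d0 \<in> C"
  shows "valid_cell scal d0" "layer_arity k L0" "\<forall>x\<in>cellset scal d0. layer_proper scal L0 x"
    "layer_maps L0 \<subseteq> M" "cell_maps d0 \<subseteq> M" "length d0 = k" "d0 \<in> tl ` C"
  using lin_dec_D(2,3)[OF dec assms] maps_C[OF assms] image_eqI[of d0 tl "L0 # d0" C] assms
  by (auto simp: valid_cell_Cons)

lemma cellset_cut_base: "L0 # d0 \<in> C \<Longrightarrow> cellset scal (cut_cell a b d0) = cellset scal d0 \<inter> open_box a b k"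
  using cellset_cut_cell cell_of_C k_less by (metis less_imp_le)

lemma base_cell_within:
  assumes "p \<in> P" "L0 # d0 \<in> C" "x \<in> cellset scal p" "x \<in> cellset scal d0"
  shows "cellset scal p \<subseteq> cellset scal d0"
proof -
  obtain d where d: "d \<in> tl ` C" "cellset scal p \<subseteq> cellset scal d"
    using base assms(1) unfolding box_refinement_def by blast
  have "d = d0"
    using lin_dec_D(5)[OF lin_dec_tl[OF dec] d(1) cell_of_C(7)[OF assms(2)]] d(2) assms(3,4) by blast
  then show ?thesis using d by simp
qed

lemma base_cell_outside_box:
  assumes "p \<in> P" "L0 # d0 \<in> C" "cellset scal p \<subseteq> cellset scal d0" "p \<noteq> cut_cell a b d0"
  shows "cellset scal p \<inter> open_box a b k = {}"
proof -
  obtain d where d: "d \<in> tl ` C" "cellset scal p \<subseteq> cellset scal d"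
      "p = cut_cell a b d \<or> cellset scal p \<inter> open_box a b k = {}"
    using base assms(1) unfolding box_refinement_def by blast
  obtain x where x: "x \<in> cellset scal p" using lin_dec_D(4)[OF base_dec assms(1)] by blast
  have "d = d0"
    using lin_dec_D(5)[OF lin_dec_tl[OF dec] d(1) cell_of_C(7)[OF assms(2)]] d(2) assms(3) x by blast
  then show ?thesis using d assms(4) by auto
qed

lemma lifted_memE:
  assumes "q \<in> lifted"
  obtains L p L0 d0 where "q = L # p" "p \<in> P" "L0 # d0 \<in> C" "cellset scal p \<subseteq> cellset scal d0"
    "L \<in> split_layer (a ! k) (b ! k) k L0 (p = cut_cell a b d0)"
  using assms unfolding lifted_def by blast

lemma lifted_memI:
  "p \<in> P \<Longrightarrow> L0 # d0 \<in> C \<Longrightarrow> cellset scal p \<subseteq> cellset scal d0 \<Longrightarrow>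
    L \<in> split_layer (a ! k) (b ! k) k L0 (p = cut_cell a b d0) \<Longrightarrow> L # p \<in> lifted"
  unfolding lifted_def by blast

lemma in_cut_base_imp_in_box:
  "L0 # d0 \<in> C \<Longrightarrow> p = cut_cell a b d0 \<Longrightarrow> x \<in> cellset scal p \<Longrightarrow> x \<in> open_box a b k"
  using cellset_cut_base by blast

lemma in_split_layer_over_base:
  assumes "L0 # d0 \<in> C" "cellset scal p \<subseteq> cellset scal d0"
    "L \<in> split_layer (a ! k) (b ! k) k L0 (p = cut_cell a b d0)" "x \<in> cellset scal p" "in_layer scal L x y"
  shows "in_layer scal L0 x y"
  using in_split_layer_imp_in_layer[OF k_less, of L0 "p = cut_cell a b d0" x L y] cell_of_C[OF assms(1)]
    in_cut_base_imp_in_box[OF assms(1) _ assms(4)] assms by blast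

lemma lifted_cell:
  assumes "q \<in> lifted"
  shows "valid_cell scal q \<and> length q = Suc k \<and> cellset scal q \<noteq> {}"
proof -
  obtain L p L0 d0 where q: "q = L # p" "p \<in> P" "L0 # d0 \<in> C" "cellset scal p \<subseteq> cellset scal d0"
      "L \<in> split_layer (a ! k) (b ! k) k L0 (p = cut_cell a b d0)"
    using assms by (rule lifted_memE)
  have L: "layer_arity k L \<and> layer_proper scal L x" if "x \<in> cellset scal p" for x
    using split_layer_proper[OF k_less, of L0 "p = cut_cell a b d0" x L] cell_of_C[OF q(3)]
      in_cut_base_imp_in_box[OF q(3) _ that] q(4,5) that by blast
  have p: "valid_cell scal p" "length p = k" "cellset scal p \<noteq> {}"
    using lin_dec_D(2-4)[OF base_dec q(2)] by auto
  then obtain x where x: "x \<in> cellset scal p" by blast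
  have "0 < b ! k - a ! k" using corners_less[OF k_less] by simp
  then obtain y where "in_layer scal L x y" using in_layer_witness[OF ovs] L[OF x] by blast
  then have "x @ [y] \<in> cellset scal q" using x q(1) by (simp add: snoc_in_cellset_Cons)
  then show ?thesis using p L q(1) by (auto simp: valid_cell_Cons)
qed

lemma finite_lifted: "finite lifted"
proof -
  let ?S = "(\<Union>L0\<in>hd ` C. split_layer (a ! k) (b ! k) k L0 True \<union> split_layer (a ! k) (b ! k) k L0 False) \<times> P"
  have "lifted \<subseteq> (\<lambda>(L, p). L # p) ` ?S"
  proof
    fix q assume "q \<in> lifted"
    then obtain L p L0 d0 where q: "q = L # p" "p \<in> P" "L0 # d0 \<in> C"
        "L \<in> split_layer (a ! k) (b ! k) k L0 (p = cut_cell a b d0)"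
      by (rule lifted_memE)
    have "L0 \<in> hd ` C" using q(3) by force
    then have "(L, p) \<in> ?S" using q by (cases "p = cut_cell a b d0") auto
    then show "q \<in> (\<lambda>(L, p). L # p) ` ?S" using q(1) by force
  qed
  moreover have "finite ?S"
    using lin_dec_D(1)[OF dec] lin_dec_D(1)[OF base_dec] by (auto intro: finite_split_layer)
  ultimately show ?thesis using finite_subset by blast
qed

lemma lifted_disjoint:
  assumes "q1 \<in> lifted" "q2 \<in> lifted" "q1 \<noteq> q2"
  shows "cellset scal q1 \<inter> cellset scal q2 = {}"
proof (rule ccontr)
  assume "cellset scal q1 \<inter> cellset scal q2 \<noteq> {}"
  then obtain z where z: "z \<in> cellset scal q1" "z \<in> cellset scal q2" by blast
  obtain L1 p1 L01 d01 where q1: "q1 = L1 # p1" "p1 \<in> P" "L01 # d01 \<in> C" "cellset scal p1 \<subseteq> cellset scal d01"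
      "L1 \<in> split_layer (a ! k) (b ! k) k L01 (p1 = cut_cell a b d01)"
    using assms(1) by (rule lifted_memE)
  obtain L2 p2 L02 d02 where q2: "q2 = L2 # p2" "p2 \<in> P" "L02 # d02 \<in> C" "cellset scal p2 \<subseteq> cellset scal d02"
      "L2 \<in> split_layer (a ! k) (b ! k) k L02 (p2 = cut_cell a b d02)"
    using assms(2) by (rule lifted_memE)
  obtain x y where xy: "z = x @ [y]" "x \<in> cellset scal p1" "in_layer scal L1 x y"
    using z(1) q1(1) by (auto simp: in_cellset_Cons)
  have xy2: "x \<in> cellset scal p2" "in_layer scal L2 x y"
    using z(2) q2(1) xy(1) by (auto simp: snoc_in_cellset_Cons)
  have same_base: "p1 = p2" using lin_dec_D(5)[OF base_dec q1(2) q2(2)] xy(2) xy2(1) by blast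
  have "x @ [y] \<in> cellset scal (L01 # d01)" "x @ [y] \<in> cellset scal (L02 # d02)"
    using in_split_layer_over_base[OF q1(3-5) xy(2,3)] in_split_layer_over_base[OF q2(3-5) xy2]
      q1(4) q2(4) xy(2) xy2(1) by (auto simp: snoc_in_cellset_Cons)
  then have same_cell: "L01 # d01 = L02 # d02" using lin_dec_D(5)[OF dec q1(3) q2(3)] by blast
  have "L1 = L2"
    using split_layer_unique[OF k_less, of L01 "p1 = cut_cell a b d01" x L1 L2 y] cell_of_C[OF q1(3)]
      in_cut_base_imp_in_box[OF q1(3) _ xy(2)] q1(5) q2(5) same_cell same_base xy(3) xy2(2) by auto
  then show False using same_base q1(1) q2(1) assms(3) by simp
qed

lemma lifted_cover_point:
  assumes "x \<in> Rn k"
  obtains L p where "L # p \<in> lifted" "x \<in> cellset scal p" "in_layer scal L x y"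
proof -
  obtain p where p: "p \<in> P" "x \<in> cellset scal p" using lin_dec_D(6)[OF base_dec] assms by blast
  have "x @ [y] \<in> Rn (Suc k)" using assms by (simp add: Rn_def)
  then obtain d where d: "d \<in> C" "x @ [y] \<in> cellset scal d" using lin_dec_D(6)[OF dec] by blast
  obtain L0 d0 where d0: "d = L0 # d0" using d(1) by (rule cell_of_C_ConsE)
  have x: "x \<in> cellset scal d0" "in_layer scal L0 x y" using d(2) d0 by (auto simp: snoc_in_cellset_Cons)
  have "cellset scal p \<subseteq> cellset scal d0" using base_cell_within p d(1) d0 x(1) by blast
  moreover obtain L where "L \<in> split_layer (a ! k) (b ! k) k L0 (p = cut_cell a b d0)" "in_layer scal L x y"
    using split_layer_cover[OF k_less, of L0 "p = cut_cell a b d0" x y] cell_of_C[of L0 d0]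
      in_cut_base_imp_in_box[of L0 d0 p x] d(1) d0 p(2) x(2) by blast
  ultimately show ?thesis using that lifted_memI p(1) d(1) d0 p(2) by blast
qed

lemma lifted_cover: "\<Union>(cellset scal ` lifted) = Rn (Suc k)"
proof
  show "\<Union>(cellset scal ` lifted) \<subseteq> Rn (Suc k)"
    using lifted_cell length_cellset by (force simp: Rn_def)
next
  show "Rn (Suc k) \<subseteq> \<Union>(cellset scal ` lifted)"
  proof
    fix z :: "'r list" assume z: "z \<in> Rn (Suc k)"
    then have "z = butlast z @ [last z]" "butlast z \<in> Rn k"
      by (auto simp: Rn_def intro!: append_butlast_last_id[symmetric])
    then obtain L p where "L # p \<in> lifted" "z \<in> cellset scal (L # p)"
      by (metis lifted_cover_point snoc_in_cellset_Cons)
    then show "z \<in> \<Union>(cellset scal ` lifted)" by blast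
  qed
qed

lemma tl_lifted: "tl ` lifted = P"
proof
  show "tl ` lifted \<subseteq> P" by (force elim: lifted_memE)
next
  show "P \<subseteq> tl ` lifted"
  proof
    fix p assume p: "p \<in> P"
    obtain x where x: "x \<in> cellset scal p" using lin_dec_D(4)[OF base_dec p] by blast
    have "x \<in> Rn k" using length_cellset[OF x] lin_dec_D(3)[OF base_dec p] by (simp add: Rn_def)
    then obtain L p' where "L # p' \<in> lifted" "x \<in> cellset scal p'"
      by (rule lifted_cover_point)
    moreover have "p' = p"
      using calculation lin_dec_D(5)[OF base_dec p] x by (force elim: lifted_memE)
    ultimately show "p \<in> tl ` lifted" by force
  qed
qed

lemma lin_dec_lifted: "lin_dec scal (Suc k) lifted"
  by (rule lin_dec_I) (use finite_lifted lifted_cell lifted_disjoint lifted_cover tl_lifted base_dec in auto)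

lemma cut_cell_in_lifted:
  assumes "d \<in> C" "cellset scal (cut_cell a b d) \<noteq> {}"
  shows "cut_cell a b d \<in> lifted"
proof -
  obtain L0 d0 where d0: "d = L0 # d0" using assms(1) by (rule cell_of_C_ConsE)
  then have cut: "cut_cell a b d = cut_layer (a ! k) (b ! k) k L0 # cut_cell a b d0"
    using cell_of_C(6) assms(1) by simp
  have "cellset scal (cut_cell a b d0) \<noteq> {}" using assms(2) cut by (auto simp: in_cellset_Cons)
  then have "cut_cell a b d0 \<in> P"
    using base cell_of_C(7)[of L0 d0] assms(1) d0 unfolding box_refinement_def by blast
  moreover have "cut_layer (a ! k) (b ! k) k L0 # cut_cell a b d0 \<in> lifted"
    by (rule lifted_memI)
      (use calculation cellset_cut_base[of L0 d0] cut_layer_in_split_layer assms(1) d0 in auto)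
  ultimately show ?thesis using cut by simp
qed

lemma lifted_cell_subset:
  assumes "L0 # d0 \<in> C" "cellset scal p \<subseteq> cellset scal d0"
    "L \<in> split_layer (a ! k) (b ! k) k L0 (p = cut_cell a b d0)"
  shows "cellset scal (L # p) \<subseteq> cellset scal (L0 # d0)"
proof
  fix z assume "z \<in> cellset scal (L # p)"
  then obtain x y where "z = x @ [y]" "x \<in> cellset scal p" "in_layer scal L x y"
    by (auto simp: in_cellset_Cons)
  then show "z \<in> cellset scal (L0 # d0)"
    using in_split_layer_over_base[OF assms] assms(2) by (auto simp: snoc_in_cellset_Cons)
qed

lemma lifted_cell_outside_box:
  assumes "p \<in> P" "L0 # d0 \<in> C" "cellset scal p \<subseteq> cellset scal d0"
    "L \<in> split_layer (a ! k) (b ! k) k L0 (p = cut_cell a b d0)"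
    "L # p \<noteq> cut_cell a b (L0 # d0)" "z \<in> cellset scal (L # p)"
  shows "z \<notin> open_box a b (Suc k)"
proof -
  obtain x y where xy: "z = x @ [y]" "x \<in> cellset scal p" "in_layer scal L x y"
    using assms(6) by (auto simp: in_cellset_Cons)
  show ?thesis
  proof (cases "p = cut_cell a b d0")
    case True
    then have "L \<noteq> cut_layer (a ! k) (b ! k) k L0" using assms(5) cell_of_C(6)[OF assms(2)] by auto
    then show ?thesis
      using split_layer_outside_box[of x k L L0 y] in_cut_base_imp_in_box[OF assms(2) True xy(2)]
        assms(4) True xy by (auto simp: snoc_in_open_box)
  next
    case False
    then show ?thesis
      using base_cell_outside_box[OF assms(1-3)] xy by (auto simp: snoc_in_open_box)
  qed
qed

lemma lifted_cell_within:
  assumes "q \<in> lifted"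
  shows "\<exists>d\<in>C. cellset scal q \<subseteq> cellset scal d \<and>
     (q = cut_cell a b d \<or> cellset scal q \<inter> open_box a b (Suc k) = {})"
proof -
  obtain L p L0 d0 where q: "q = L # p" "p \<in> P" "L0 # d0 \<in> C" "cellset scal p \<subseteq> cellset scal d0"
      "L \<in> split_layer (a ! k) (b ! k) k L0 (p = cut_cell a b d0)"
    using assms by (rule lifted_memE)
  then show ?thesis
    using lifted_cell_subset[of L0 d0 p L] lifted_cell_outside_box[of p L0 d0 L] assms by blast
qed

lemma box_refinement_lifted: "box_refinement scal a b (Suc k) C lifted"
  unfolding box_refinement_def
  using lin_dec_lifted cut_cell_in_lifted lifted_cell_within by blast

end

context large_box
begin

lemma box_refinement_exists:
  assumes "lin_dec scal k C" "k \<le> n" "\<And>d. d \<in> C \<Longrightarrow> cell_maps d \<subseteq> M"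
  shows "\<exists>C'. box_refinement scal a b k C C'"
  using assms
proof (induct k arbitrary: C)
  case 0
  then have "C = {[]}" using lin_dec_0_iff by blast
  then show ?case unfolding box_refinement_def by (intro exI[of _ C]) (auto simp: lin_dec_0_iff)
next
  case (Suc k)
  obtain P where "box_refinement scal a b k (tl ` C) P"
    using Suc.hyps[OF lin_dec_tl[OF Suc.prems(1)]] Suc.prems(2,3) cell_maps_tl by fastforce
  then interpret box_refinement_step scal a b n M k C P
    using Suc.prems by unfold_locales auto
  show ?case using box_refinement_lifted by blast
qed

section \<open>The cut decomposition is special\<close>

definition cut_dec :: "('l,'r) celld set \<Rightarrow> ('l,'r) celld set" where
  "cut_dec D = cut_cell a b ` {d\<in>D. cellset scal (cut_cell a b d) \<noteq> {}}"

lemma cellset_cut_cell_tl: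
  assumes "valid_cell scal d" "length d \<le> n" "cell_maps d \<subseteq> M"
  shows "cellset scal (cut_cell a b (tl d)) = cellset scal (tl d) \<inter> open_box a b (length (tl d))"
  using assms cellset_cut_cell[of "tl d"] by (cases d) (auto simp: valid_cell_Cons)

lemma lin_dec_of_cut_dec:
  assumes C: "lin_dec scal k C" "\<forall>d\<in>C. cellset scal d \<subseteq> Y \<or> cellset scal d \<inter> Y = {}"
      "\<forall>d\<in>C. cell_maps d \<subseteq> M"
    and D: "D = {d\<in>C. cellset scal d \<inter> Y \<noteq> {}}"
    and "k \<le> n"
  shows "lin_dec_of scal k (open_box a b k \<inter> Y) (cut_dec D)"
proof -
  have cut: "cellset scal (cut_cell a b d) = cellset scal d \<inter> open_box a b k" if "d \<in> C" for d
    using cellset_cut_cell lin_dec_D(2,3)[OF C(1) that] C(3) that \<open>k \<le> n\<close> by metis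
  obtain C' where C': "lin_dec scal k C'"
      "\<And>d. d\<in>C \<Longrightarrow> cellset scal (cut_cell a b d) \<noteq> {} \<Longrightarrow> cut_cell a b d \<in> C'"
      "\<And>q. q\<in>C' \<Longrightarrow> \<exists>d\<in>C. cellset scal q \<subseteq> cellset scal d \<and>
          (q = cut_cell a b d \<or> cellset scal q \<inter> open_box a b k = {})"
    using box_refinement_exists[OF C(1) \<open>k \<le> n\<close>] C(3) unfolding box_refinement_def by blast
  have "cellset scal q \<subseteq> open_box a b k \<inter> Y \<or> cellset scal q \<inter> (open_box a b k \<inter> Y) = {}"
    if "q \<in> C'" for q
    using C'(3)[OF that] cut C(2) by blast
  moreover have "cut_dec D = {q\<in>C'. cellset scal q \<inter> (open_box a b k \<inter> Y) \<noteq> {}}"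
  proof
    show "cut_dec D \<subseteq> {q\<in>C'. cellset scal q \<inter> (open_box a b k \<inter> Y) \<noteq> {}}"
    proof
      fix q assume "q \<in> cut_dec D"
      then obtain d where d: "d \<in> C" "cellset scal d \<subseteq> Y" "q = cut_cell a b d" "cellset scal q \<noteq> {}"
        unfolding cut_dec_def using C(2) D by blast
      then show "q \<in> {q\<in>C'. cellset scal q \<inter> (open_box a b k \<inter> Y) \<noteq> {}}"
        using C'(2) cut[OF d(1)] by auto
    qed
    show "{q\<in>C'. cellset scal q \<inter> (open_box a b k \<inter> Y) \<noteq> {}} \<subseteq> cut_dec D"
    proof
      fix q assume q: "q \<in> {q\<in>C'. cellset scal q \<inter> (open_box a b k \<inter> Y) \<noteq> {}}"
      then obtain d where "d \<in> C" "cellset scal q \<subseteq> cellset scal d" "q = cut_cell a b d"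
        using C'(3) by blast
      then show "q \<in> cut_dec D" unfolding cut_dec_def using q D by blast
    qed
  qed
  ultimately show ?thesis unfolding lin_dec_of_def using C'(1) by blast
qed

context
  fixes k Y D
  assumes D: "special_dec_over scal (Suc k) Y D M" and k_less: "k < n"
begin

lemma cells_of_D: "d \<in> D \<Longrightarrow> valid_cell scal d \<and> length d = Suc k \<and> cell_maps d \<subseteq> M"
  using special_dec_over_cells[OF D] .

lemma cellset_cut_tl_of_D:
  assumes "d \<in> D"
  shows "cellset scal (cut_cell a b (tl d)) = cellset scal (tl d) \<inter> open_box a b k"
proof -
  have "valid_cell scal d" "length d \<le> n" "cell_maps d \<subseteq> M" "length (tl d) = k"
    using cells_of_D[OF assms] k_less by auto
  then show ?thesis using cellset_cut_cell_tl by metis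
qed

lemma cut_cell_fibre_of_D:
  assumes "d \<in> D" "x \<in> cellset scal (cut_cell a b (tl d))"
  shows "\<exists>y. x @ [y] \<in> cellset scal (cut_cell a b d)"
proof (cases d)
  case (Cons L d0)
  then show ?thesis
    using cut_cell_fibre[of L d0 x] cells_of_D[OF assms(1)] k_less assms(2) by (simp only: list.sel)
qed (use cells_of_D[OF assms(1)] in simp)

lemma proj_box_inter:
  assumes "Y \<subseteq> Rn (Suc k)"
  shows "proj (open_box a b (Suc k) \<inter> Y) = open_box a b k \<inter> proj Y"
proof
  show "proj (open_box a b (Suc k) \<inter> Y) \<subseteq> open_box a b k \<inter> proj Y"
    unfolding proj_def using butlast_in_open_box by blast
  show "open_box a b k \<inter> proj Y \<subseteq> proj (open_box a b (Suc k) \<inter> Y)"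
  proof
    fix x assume x: "x \<in> open_box a b k \<inter> proj Y"
    then obtain z where z: "z \<in> Y" "x = butlast z" unfolding proj_def by blast
    obtain C where C: "lin_dec scal (Suc k) C" "\<forall>d\<in>C. cellset scal d \<subseteq> Y \<or> cellset scal d \<inter> Y = {}"
        "D = {d\<in>C. cellset scal d \<inter> Y \<noteq> {}}"
      using D by (rule special_dec_overE)
    obtain d where d: "d \<in> C" "z \<in> cellset scal d"
      using lin_dec_D(6)[OF C(1)] z(1) assms by blast
    have dD: "d \<in> D" "cellset scal d \<subseteq> Y" using C(2,3) d z(1) by auto
    have "x \<in> cellset scal (tl d)"
      using d(2) z(2) cells_of_D[OF dD(1)] by (cases d) (auto simp: in_cellset_Cons)
    then have "x \<in> cellset scal (cut_cell a b (tl d))" using cellset_cut_tl_of_D[OF dD(1)] x by blast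
    then obtain y where "x @ [y] \<in> cellset scal (cut_cell a b d)" using cut_cell_fibre_of_D[OF dD(1)] by blast
    moreover have "cellset scal (cut_cell a b d) = cellset scal d \<inter> open_box a b (Suc k)"
      using cellset_cut_cell cells_of_D[OF dD(1)] k_less by (metis Suc_leI)
    ultimately have "x @ [y] \<in> open_box a b (Suc k) \<inter> Y" using dD(2) by blast
    then show "x \<in> proj (open_box a b (Suc k) \<inter> Y)" unfolding proj_def by force
  qed
qed

lemma tl_cut_dec: "tl ` cut_dec D = cut_dec (tl ` D)"
proof
  show "tl ` cut_dec D \<subseteq> cut_dec (tl ` D)"
  proof
    fix q assume "q \<in> tl ` cut_dec D"
    then obtain d where d: "d \<in> D" "cellset scal (cut_cell a b d) \<noteq> {}" "q = cut_cell a b (tl d)"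
      unfolding cut_dec_def using tl_cut_cell by force
    have "cellset scal (cut_cell a b (tl d)) \<noteq> {}"
      using d(2) cells_of_D[OF d(1)] by (cases d) (auto simp: in_cellset_Cons)
    then show "q \<in> cut_dec (tl ` D)" unfolding cut_dec_def using d(1,3) by blast
  qed
  show "cut_dec (tl ` D) \<subseteq> tl ` cut_dec D"
  proof
    fix q assume "q \<in> cut_dec (tl ` D)"
    then obtain d x where d: "d \<in> D" "q = cut_cell a b (tl d)" "x \<in> cellset scal (cut_cell a b (tl d))"
      unfolding cut_dec_def by blast
    then obtain y where "x @ [y] \<in> cellset scal (cut_cell a b d)" using cut_cell_fibre_of_D by blast
    then have "cut_cell a b d \<in> cut_dec D" unfolding cut_dec_def using d(1) by blast
    then show "q \<in> tl ` cut_dec D" using d(2) tl_cut_cell by (metis image_eqI)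
  qed
qed

lemma cond_graphs_cut_dec:
  assumes cg: "cond_graphs scal D"
  shows "cond_graphs scal (cut_dec D)"
  unfolding cond_graphs_def
proof (intro ballI allI impI)
  fix q1 q2 cs c ds e V
  assume q: "q1 \<in> cut_dec D" "q2 \<in> cut_dec D" "hd q1 = Gr cs c" "hd q2 = Gr ds e" "V \<in> tl ` cut_dec D"
  obtain d1 d2 where d: "d1 \<in> D" "q1 = cut_cell a b d1" "d2 \<in> D" "q2 = cut_cell a b d2"
    using q(1,2) unfolding cut_dec_def by blast
  obtain q3 where q3: "q3 \<in> cut_dec D" "V = tl q3" using q(5) by blast
  then obtain d3 where "d3 \<in> D" "q3 = cut_cell a b d3" unfolding cut_dec_def by blast
  then have d3: "d3 \<in> D" "V = cut_cell a b (tl d3)" using q3(2) by (simp_all add: tl_cut_cell)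
  have "hd d1 = Gr cs c" "hd d2 = Gr ds e"
    using hd_cut_cell_Gr[of a b d1 cs c] hd_cut_cell_Gr[of a b d2 ds e] q(3,4) d(2,4) by simp_all
  then have "(\<forall>v\<in>cellset scal (tl d3). lval scal cs c v < lval scal ds e v) \<or>
      (\<forall>v\<in>cellset scal (tl d3). lval scal cs c v = lval scal ds e v) \<or>
      (\<forall>v\<in>cellset scal (tl d3). lval scal cs c v > lval scal ds e v)"
    using cg[unfolded cond_graphs_def, rule_format, OF d(1,3)] imageI[OF d3(1), of tl] by blast
  moreover have "cellset scal V \<subseteq> cellset scal (tl d3)"
    using cellset_cut_tl_of_D[OF d3(1)] d3(2) by blast
  ultimately show "(\<forall>v\<in>cellset scal V. lval scal cs c v < lval scal ds e v) \<or>
      (\<forall>v\<in>cellset scal V. lval scal cs c v = lval scal ds e v) \<or>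
      (\<forall>v\<in>cellset scal V. lval scal cs c v > lval scal ds e v)"
    by blast
qed

lemma cond_bands_cut_dec: "cond_bands scal k D \<Longrightarrow> cond_bands scal k (cut_dec D)"
  unfolding cond_bands_def
proof (intro ballI allI impI notI)
  fix q1 q2 hs h f' g'
  assume cb: "\<forall>d\<in>D. \<forall>d'\<in>D. \<forall>hs h f g. hd d = Gr hs h \<longrightarrow> hd d' = Bd f g \<longrightarrow>
      \<not> (\<exists>c\<in>cl k (cellset scal (tl d)) \<inter> cl k (cellset scal (tl d')).
            lo_lt scal f c (lval scal hs h c) \<and> hi_gt scal g c (lval scal hs h c))"
    and q: "q1 \<in> cut_dec D" "q2 \<in> cut_dec D" "hd q1 = Gr hs h" "hd q2 = Bd f' g'"
    and ex: "\<exists>c\<in>cl k (cellset scal (tl q1)) \<inter> cl k (cellset scal (tl q2)).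
      lo_lt scal f' c (lval scal hs h c) \<and> hi_gt scal g' c (lval scal hs h c)"
  obtain d1 d2 where d: "d1 \<in> D" "q1 = cut_cell a b d1" "d2 \<in> D" "q2 = cut_cell a b d2"
    using q(1,2) unfolding cut_dec_def by blast
  have "d2 \<noteq> []" using cells_of_D[OF d(3)] by auto
  then obtain f g d0 where d2: "d2 = Bd f g # d0"
      "f' = cut_lower (a ! length d0) (length d0) f" "g' = cut_upper (b ! length d0) (length d0) g"
    using hd_cut_cell_Bd q(4) d(4) by metis
  have cl_sub: "cl k (cellset scal (tl (cut_cell a b d))) \<subseteq> cl k (cellset scal (tl d))" if "d \<in> D" for d
    using cl_mono cellset_cut_tl_of_D[OF that] tl_cut_cell by (metis inf_le1)
  obtain c where c: "c \<in> cl k (cellset scal (tl q1))" "c \<in> cl k (cellset scal (tl q2))"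
      "lo_lt scal f' c (lval scal hs h c)" "hi_gt scal g' c (lval scal hs h c)"
    using ex by blast
  have "c \<in> cl k (cellset scal (tl d1))" "c \<in> cl k (cellset scal (tl d2))"
    using c(1,2) cl_sub[OF d(1)] cl_sub[OF d(3)] d(2,4) by auto
  moreover have "lo_lt scal f c (lval scal hs h c)" "hi_gt scal g c (lval scal hs h c)"
    using c(3,4) lo_lt_cut_lower hi_gt_cut_upper unfolding d2(2,3) by blast+
  ultimately show False
    using cb[rule_format, OF d(1,3) hd_cut_cell_Gr[of a b d1]] q(3) d(2) d2(1) by auto
qed

end

lemma special_dec_cut_dec:
  "special_dec_over scal k Y D M \<Longrightarrow> 1 \<le> k \<Longrightarrow> k \<le> n \<Longrightarrow> Y \<subseteq> Rn k \<Longrightarrow>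
    special_dec scal k (open_box a b k \<inter> Y) (cut_dec D)"
proof (induct k arbitrary: Y D)
  case (Suc k)
  obtain C where C: "lin_dec scal (Suc k) C" "\<forall>d\<in>C. cellset scal d \<subseteq> Y \<or> cellset scal d \<inter> Y = {}"
      "D = {d\<in>C. cellset scal d \<inter> Y \<noteq> {}}" "\<forall>d\<in>C. cell_maps d \<subseteq> M"
    using Suc.prems(1) by (rule special_dec_overE)
  have "lin_dec_of scal (Suc k) (open_box a b (Suc k) \<inter> Y) (cut_dec D)"
    using lin_dec_of_cut_dec[OF C(1,2,4,3) Suc.prems(3)] .
  moreover have "special_dec scal k (proj (open_box a b (Suc k) \<inter> Y)) (tl ` cut_dec D) \<and>
      cond_graphs scal (cut_dec D) \<and> cond_bands scal k (cut_dec D)" if "1 < Suc k"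
  proof -
    have rec: "special_dec_over scal k (proj Y) (tl ` D) M" "cond_graphs scal D" "cond_bands scal k D"
      using special_dec_over_tl[OF Suc.prems(1)] that by auto
    have "proj Y \<subseteq> Rn k" using Suc.prems(4) unfolding proj_def Rn_def by auto
    then show ?thesis
      using Suc.hyps[OF rec(1)] that Suc.prems rec(2,3)
        proj_box_inter[OF Suc.prems(1)] tl_cut_dec[OF Suc.prems(1)]
        cond_graphs_cut_dec[OF Suc.prems(1)] cond_bands_cut_dec[OF Suc.prems(1)]
      by simp
  qed
  ultimately show ?case by (subst special_dec.simps) simp
qed simp

lemma special_lin_dec_box_inter:
  assumes D: "special_dec_over scal n Y D M" and "1 \<le> n" "Y \<subseteq> Rn n"
  shows "special_lin_dec scal n (open_box a b n \<inter> Y) ({open_box a b n \<inter> S | S. S \<in> cellset scal ` D} - {{}})"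
proof -
  have "cellset scal (cut_cell a b d) = open_box a b n \<inter> cellset scal d" if "d \<in> D" for d
    using cellset_cut_cell special_dec_over_cells[OF D that] by auto
  then have "cellset scal ` cut_dec D = {open_box a b n \<inter> S | S. S \<in> cellset scal ` D} - {{}}"
    unfolding cut_dec_def image_image by auto
  then show ?thesis
    unfolding special_lin_dec_def using special_dec_cut_dec[OF D assms(2) order.refl assms(3)] by blast
qed

end

section \<open>Choosing the box\<close>

lemma lval_box_bounds:
  fixes scal :: "'l::{division_ring,linordered_ring_strict} \<Rightarrow> 'r::linordered_ab_group_add \<Rightarrow> 'r"
  assumes ovs: "ordered_vs scal" and "length cs = m" and x: "x \<in> open_box a b m"
  shows "(\<Sum>i<m. min (scal (cs ! i) (a ! i)) (scal (cs ! i) (b ! i))) + c \<le> lval scal cs c x \<and>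
         lval scal cs c x \<le> (\<Sum>i<m. max (scal (cs ! i) (a ! i)) (scal (cs ! i) (b ! i))) + c"
proof -
  have x: "length x = m" "\<And>i. i < m \<Longrightarrow> a ! i < x ! i \<and> x ! i < b ! i"
    using x unfolding open_box_def by auto
  have "lval scal cs c x = (\<Sum>i<m. scal (cs ! i) (x ! i)) + c"
    unfolding lval_def using assms(2) x(1) by (simp add: sum_list_sum_nth atLeast0LessThan)
  moreover have "(\<Sum>i<m. min (scal (cs ! i) (a ! i)) (scal (cs ! i) (b ! i))) \<le> (\<Sum>i<m. scal (cs ! i) (x ! i))"
    "(\<Sum>i<m. scal (cs ! i) (x ! i)) \<le> (\<Sum>i<m. max (scal (cs ! i) (a ! i)) (scal (cs ! i) (b ! i)))"
    by (rule sum_mono; use ovs_between_min_max[OF ovs] x(2) in blast)+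
  ultimately show ?thesis by simp
qed

lemma enclosing_interval_exists:
  fixes scal :: "'l::{division_ring,linordered_ring_strict} \<Rightarrow> 'r::linordered_ab_group_add \<Rightarrow> 'r"
  assumes ovs: "ordered_vs scal" and "finite M" and "a1 < b1"
  shows "\<exists>A B. A \<le> a1 \<and> b1 \<le> B \<and>
    (\<forall>cs c x. (cs, c) \<in> M \<longrightarrow> length cs = m \<longrightarrow> x \<in> open_box a b m \<longrightarrow>
       A < lval scal cs c x \<and> lval scal cs c x < B)"
proof -
  define Ms where "Ms = {p \<in> M. length (fst p) = m}"
  define lo where "lo p = (\<Sum>i<m. min (scal (fst p ! i) (a ! i)) (scal (fst p ! i) (b ! i))) + snd p" for p
  define hi where "hi p = (\<Sum>i<m. max (scal (fst p ! i) (a ! i)) (scal (fst p ! i) (b ! i))) + snd p" for p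
  define e where "e = b1 - a1"
  define A where "A = Min (insert a1 (lo ` Ms)) - e"
  define B where "B = Max (insert b1 (hi ` Ms)) + e"
  have fin: "finite Ms" using assms(2) unfolding Ms_def by simp
  have "A < Min (insert a1 (lo ` Ms))" "Max (insert b1 (hi ` Ms)) < B"
    using assms(3) unfolding A_def B_def e_def by simp_all
  then have A: "A < a1" "\<forall>p\<in>Ms. A < lo p" and B: "b1 < B" "\<forall>p\<in>Ms. hi p < B"
    using fin by simp_all
  have "\<forall>cs c x. (cs, c) \<in> M \<longrightarrow> length cs = m \<longrightarrow> x \<in> open_box a b m \<longrightarrow>
      A < lval scal cs c x \<and> lval scal cs c x < B"
  proof (intro allI impI)
    fix cs c x assume "(cs, c) \<in> M" "length cs = m" "x \<in> open_box a b m"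
    then have "(cs, c) \<in> Ms" "lo (cs, c) \<le> lval scal cs c x \<and> lval scal cs c x \<le> hi (cs, c)"
      using lval_box_bounds[OF ovs] unfolding Ms_def lo_def hi_def by auto
    then show "A < lval scal cs c x \<and> lval scal cs c x < B"
      using A(2) B(2) by (meson order.strict_trans2 order.strict_trans1)
  qed
  then show ?thesis using A(1) B(1) by (intro exI[of _ A] exI[of _ B]) (simp add: less_imp_le)
qed

lemma box_encloses_snoc:
  assumes "box_encloses scal a b m M" "length a = m" "length b = m"
    and "\<And>cs c x. (cs, c) \<in> M \<Longrightarrow> length cs = m \<Longrightarrow> x \<in> open_box a b m \<Longrightarrow>
      A < lval scal cs c x \<and> lval scal cs c x < B"
  shows "box_encloses scal (a @ [A]) (b @ [B]) (Suc m) M"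
  unfolding box_encloses_def
proof (intro allI impI)
  fix cs c x
  assume cs: "(cs, c) \<in> M" "length cs < Suc m" and x: "x \<in> open_box (a @ [A]) (b @ [B]) (length cs)"
  have x': "x \<in> open_box a b (length cs)"
    using x open_box_append[of "length cs" a b "[A]" "[B]"] assms(2,3) cs(2) by simp
  show "(a @ [A]) ! length cs < lval scal cs c x \<and> lval scal cs c x < (b @ [B]) ! length cs"
  proof (cases "length cs < m")
    case True
    then show ?thesis
      using assms(1)[unfolded box_encloses_def, rule_format, OF cs(1) True x'] assms(2,3)
      by (simp add: nth_append)
  next
    case False
    then have "length cs = m" using cs(2) by simp
    then show ?thesis using assms(2,3) assms(4)[of cs c x] cs(1) x' by (simp add: nth_append)
  qed
qed

lemma box_encloses_exists:
  fixes scal :: "'l::{division_ring,linordered_ring_strict} \<Rightarrow> 'r::linordered_ab_group_add \<Rightarrow> 'r"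
  assumes ovs: "ordered_vs scal" and "finite M" and "length b1 = length a1"
    and ab1: "\<forall>i<length a1. a1 ! i < b1 ! i" and "m \<le> length a1"
  shows "\<exists>a b. length a = m \<and> length b = m \<and>
     (\<forall>i<m. a ! i < b ! i \<and> a ! i \<le> a1 ! i \<and> b1 ! i \<le> b ! i) \<and> box_encloses scal a b m M"
  using assms(5)
proof (induct m)
  case 0
  show ?case by (simp add: box_encloses_def)
next
  case (Suc m)
  then obtain a b where ab: "length a = m" "length b = m"
      "\<forall>i<m. a ! i < b ! i \<and> a ! i \<le> a1 ! i \<and> b1 ! i \<le> b ! i" "box_encloses scal a b m M"
    by auto
  have "a1 ! m < b1 ! m" using ab1 Suc.prems by simp
  then obtain A B where AB: "A \<le> a1 ! m" "b1 ! m \<le> B"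
      "\<And>cs c x. (cs, c) \<in> M \<Longrightarrow> length cs = m \<Longrightarrow> x \<in> open_box a b m \<Longrightarrow>
         A < lval scal cs c x \<and> lval scal cs c x < B"
    using enclosing_interval_exists[OF ovs assms(2)] by blast
  have "A < B" using AB \<open>a1 ! m < b1 ! m\<close> by (meson order.strict_trans1 order.strict_trans2)
  then have "\<forall>i<Suc m. (a @ [A]) ! i < (b @ [B]) ! i \<and> (a @ [A]) ! i \<le> a1 ! i \<and> b1 ! i \<le> (b @ [B]) ! i"
    using ab(1-3) AB(1,2) by (auto simp: nth_append less_Suc_eq)
  moreover have "box_encloses scal (a @ [A]) (b @ [B]) (Suc m) M"
    using box_encloses_snoc[OF ab(4,1,2) AB(3)] .
  ultimately show ?case
    using ab(1,2) by (intro exI[of _ "a @ [A]"] exI[of _ "b @ [B]"]) simp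
qed

lemma is_box_open_box: "length a = n \<Longrightarrow> length b = n \<Longrightarrow> \<forall>i<n. a ! i < b ! i \<Longrightarrow> is_box n (open_box a b n)"
  unfolding is_box_def open_box_def by blast

lemma open_box_mono:
  assumes "\<forall>i<n. a ! i \<le> a1 ! i \<and> b1 ! i \<le> b ! i"
  shows "open_box a1 b1 n \<subseteq> open_box a b n"
  using assms unfolding open_box_def by (auto intro: order.strict_trans1 order.strict_trans2)

theorem mainTheorem12:
  fixes scal :: "'l::{division_ring,linordered_ring_strict} \<Rightarrow> 'r::{linordered_ab_group_add,linorder_topology} \<Rightarrow> 'r"
    and n :: nat and Y :: "'r list set" and \<C> :: "'r list set set" and B1 :: "'r list set"
  assumes "ordered_vs scal"
    and "1 \<le> n"
    and "Y \<subseteq> Rn n"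
    and "definable scal n Y"
    and "special_lin_dec scal n Y \<C>"
    and "is_box n B1"
  shows "\<exists>B. is_box n B \<and> B1 \<subseteq> B \<and>
           special_lin_dec scal n (B \<inter> Y) ({B \<inter> D | D. D \<in> \<C>} - {{}})"
proof -
  obtain a1 b1 where ab1: "length a1 = n" "length b1 = n" "\<forall>i<n. a1 ! i < b1 ! i" "B1 = open_box a1 b1 n"
    using assms(6) unfolding is_box_def open_box_def by blast
  obtain D where D: "special_dec scal n Y D" "cellset scal ` D = \<C>"
    using assms(5) unfolding special_lin_dec_def by blast
  obtain M where M: "finite M" "special_dec_over scal n Y D M"
    using special_dec_over_finite[OF D(1)] by blast
  obtain a b where ab: "length a = n" "length b = n" "\<forall>i<n. a ! i < b ! i \<and> a ! i \<le> a1 ! i \<and> b1 ! i \<le> b ! i"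
      "box_encloses scal a b n M"
    using box_encloses_exists[OF assms(1) M(1), of b1 a1 n] ab1 by auto
  interpret large_box scal a b n M
    using assms(1) ab by unfold_locales auto
  show ?thesis
    using is_box_open_box[OF ab(1,2)] open_box_mono[of n a a1 b1 b] ab(3) ab1(4)
      special_lin_dec_box_inter[OF M(2) assms(2,3)] D(2)
    by (intro exI[of _ "open_box a b n"]) auto
qed

end
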